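(* Let $\mathcal{T}$ be a nilpotent Lie triple system of dimension $3$ over a field $\mathbb{F}$ of characteristic different from $2$. Then $\mathcal{T}$ is isomorphic to exactly one of: $\mathcal{T}_{3,1}$, the abelian Lie triple system (all products zero); or $\mathcal{T}_{3,2}$, with basis $e_1,e_2,e_3$ and nonzero products $[e_1,e_2,e_1]=e_3$, $[e_2,e_1,e_1]=-e_3$. *)

theory Defs
  imports Main "HOL.Vector_Spaces" "HOL-Library.Product_Plus"
begin

definition lie_triple_system ::
  "('a::field \<Rightarrow> 'v::ab_group_add \<Rightarrow> 'v) \<Rightarrow> ('v \<Rightarrow> 'v \<Rightarrow> 'v \<Rightarrow> 'v) \<Rightarrow> bool" where
  "lie_triple_system s t \<longleftrightarrow>
     vector_space s \<and>
     (\<forall>y z. Vector_Spaces.linear s s (\<lambda>x. t x y z)) \<and>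
     (\<forall>x z. Vector_Spaces.linear s s (\<lambda>y. t x y z)) \<and>
     (\<forall>x y. Vector_Spaces.linear s s (\<lambda>z. t x y z)) \<and>
     (\<forall>x y. t x x y = 0) \<and>
     (\<forall>x y z. t x y z + t y z x + t z x y = 0) \<and>
     (\<forall>u v x y z. t u v (t x y z) = t (t u v x) y z + t x (t u v y) z + t x y (t u v z))"

text \<open>Lower central series: T^1 = T, T^(n+1) = [T^n, T, T] (indexed from 0 here).\<close>

fun lts_lcs ::
  "('a::field \<Rightarrow> 'v::ab_group_add \<Rightarrow> 'v) \<Rightarrow> ('v \<Rightarrow> 'v \<Rightarrow> 'v \<Rightarrow> 'v) \<Rightarrow> nat \<Rightarrow> 'v set" where
  "lts_lcs s t 0 = UNIV"
| "lts_lcs s t (Suc n) = module.span s {t a b c | a b c. a \<in> lts_lcs s t n}"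

definition lts_nilpotent ::
  "('a::field \<Rightarrow> 'v::ab_group_add \<Rightarrow> 'v) \<Rightarrow> ('v \<Rightarrow> 'v \<Rightarrow> 'v \<Rightarrow> 'v) \<Rightarrow> bool" where
  "lts_nilpotent s t \<longleftrightarrow> (\<exists>n. lts_lcs s t n = {0})"

definition lts_isomorphic ::
  "('a::field \<Rightarrow> 'v::ab_group_add \<Rightarrow> 'v) \<Rightarrow> ('v \<Rightarrow> 'v \<Rightarrow> 'v \<Rightarrow> 'v) \<Rightarrow>
   ('a \<Rightarrow> 'w::ab_group_add \<Rightarrow> 'w) \<Rightarrow> ('w \<Rightarrow> 'w \<Rightarrow> 'w \<Rightarrow> 'w) \<Rightarrow> bool" where
  "lts_isomorphic s1 t1 s2 t2 \<longleftrightarrow>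
     (\<exists>f. Vector_Spaces.linear s1 s2 f \<and> bij f \<and>
          (\<forall>x y z. f (t1 x y z) = t2 (f x) (f y) (f z)))"

text \<open>The model space F^3 with basis e1=(1,0,0), e2=(0,1,0), e3=(0,0,1).\<close>

definition scale3 :: "'a::field \<Rightarrow> 'a \<times> 'a \<times> 'a \<Rightarrow> 'a \<times> 'a \<times> 'a" where
  "scale3 c v = (case v of (x1, x2, x3) \<Rightarrow> (c * x1, c * x2, c * x3))"

definition T31 :: "'a::field \<times> 'a \<times> 'a \<Rightarrow> 'a \<times> 'a \<times> 'a \<Rightarrow> 'a \<times> 'a \<times> 'a \<Rightarrow> 'a \<times> 'a \<times> 'a" where
  "T31 x y z = 0"

text \<open>T_{3,2}: trilinear extension of [e1,e2,e1] = e3, [e2,e1,e1] = -e3, other basis products zero.\<close>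
definition T32 :: "'a::field \<times> 'a \<times> 'a \<Rightarrow> 'a \<times> 'a \<times> 'a \<Rightarrow> 'a \<times> 'a \<times> 'a \<Rightarrow> 'a \<times> 'a \<times> 'a" where
  "T32 x y z = (case x of (x1, x2, x3) \<Rightarrow> case y of (y1, y2, y3) \<Rightarrow> case z of (z1, z2, z3) \<Rightarrow>
       (0, 0, z1 * (x1 * y2 - x2 * y1)))"

end

(* A nonzero product in a nilpotent Lie triple system T forces lcs1 = [T,T,T] to differ from
   lcs2 = [lcs1,T,T]. In dimension 3 this makes lcs1 a line: if it contained two independent
   vectors, then T = Fx + lcs1 for some x, and since t x x _ = 0 every product would already lie
   in lcs2. A line strictly containing lcs2 forces lcs2 = 0, so lcs1 = Fw is central, and in a
   basis x, y, w the product reads t u v r = det(u, v) phi(r) w for a linear form phi. Taking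
   e2 in span {x, y} with phi(e2) = 0 and e1 with phi(e1) = 1 yields the basis of T32; the
   abelian case gives T31, and the two models are told apart by whether the product vanishes. *)

theory Submission
  imports Defs
begin

lemma vector_space_scale3: "vector_space (scale3 :: 'a::field \<Rightarrow> _)"
  by unfold_locales (auto simp: scale3_def plus_prod_def algebra_simps split: prod.splits)

lemma lts_isomorphicI_inverse:
  assumes lin: "Vector_Spaces.linear s2 s1 h" and "bij h"
    and hom: "\<And>u v r. t1 (h u) (h v) (h r) = h (t2 u v r)"
  shows "lts_isomorphic s1 t1 s2 t2"
proof -
  interpret vector_space_pair s2 s1
    using lin by (simp add: linear_iff vector_space_pair_def)
  obtain g where g: "Vector_Spaces.linear s1 s2 g" "g \<circ> h = id"
    using linear_injective_left_inverse[OF lin bij_is_inj[OF \<open>bij h\<close>]] by blast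
  have gh: "g (h x) = x" for x
    using g(2) by (metis comp_apply id_apply)
  have hg: "h (g y) = y" for y
    using \<open>bij h\<close> gh by (metis bij_is_surj surj_f_inv_f)
  have "bij g"
    using gh hg by (intro o_bij[of h]) auto
  moreover have "g (t1 x y z) = t2 (g x) (g y) (g z)" for x y z
    by (metis gh hg hom)
  ultimately show ?thesis
    using g(1) unfolding lts_isomorphic_def by blast
qed

lemma t_eq_0_if_lts_isomorphic_T31:
  assumes "lts_isomorphic s t scale3 T31"
  shows "t x y z = 0"
proof -
  obtain f where f: "Vector_Spaces.linear s scale3 f" "bij f"
    and hom: "\<And>x y z. f (t x y z) = T31 (f x) (f y) (f z)"
    using assms unfolding lts_isomorphic_def by blast
  have "f (t x y z) = f 0"
    using hom module_hom.zero[OF module_hom_linearI[OF f(1)]] by (simp add: T31_def)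
  then show ?thesis
    using bij_is_inj[OF f(2)] by (simp add: inj_eq)
qed

lemma t_ne_0_if_lts_isomorphic_T32:
  assumes "lts_isomorphic s t scale3 T32"
  shows "\<exists>x y z. t x y z \<noteq> 0"
proof -
  obtain f where f: "Vector_Spaces.linear s scale3 f" "bij f"
    and hom: "\<And>x y z. f (t x y z) = T32 (f x) (f y) (f z)"
    using assms unfolding lts_isomorphic_def by blast
  obtain x y where "f x = (1, 0, 0)" "f y = (0, 1, 0)"
    using bij_is_surj[OF f(2)] by (metis surj_f_inv_f)
  then have "f (t x y x) \<noteq> f 0"
    using hom module_hom.zero[OF module_hom_linearI[OF f(1)]] by (simp add: T32_def zero_prod_def)
  then show ?thesis
    by metis
qed

context vector_space
begin

lemma span_eq_UNIV_if_card_eq_dim: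
  assumes "independent S" "card S = dim UNIV" "card S \<noteq> 0"
  shows "span S = UNIV"
proof -
  obtain B where B: "independent B" "UNIV \<subseteq> span B" "card B = dim UNIV"
    using basis_exists[of UNIV] by blast
  have "finite B" "finite S"
    using B(3) assms(2,3) by (metis card_eq_0_iff)+
  interpret finite_dimensional_vector_space scale B
    using B \<open>finite B\<close> by unfold_locales auto
  show ?thesis
    using card_eq_dim[of S UNIV] assms \<open>finite S\<close> by auto
qed

lemma scalars_eq_0_if_triangular:
  assumes "z \<noteq> 0" "y \<notin> span {z}" "x \<notin> span {y, z}"
    and eq: "a *s x + b *s y + c *s z = 0"
  shows "a = 0 \<and> b = 0 \<and> c = 0"
proof -
  have unscale: "v \<in> span S" if "k \<noteq> 0" "k *s v \<in> span S" for k v S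
    using span_scale[OF that(2), of "inverse k"] that(1) by simp
  have "a *s x = - (b *s y + c *s z)"
    using eq by (metis add.assoc eq_neg_iff_add_eq_0)
  moreover have "- (b *s y + c *s z) \<in> span {y, z}"
    by (intro span_neg span_add span_scale span_base) auto
  ultimately have a: "a = 0"
    using unscale assms(3) by metis
  have "b *s y = - (c *s z)"
    using eq a by (simp add: eq_neg_iff_add_eq_0)
  moreover have "- (c *s z) \<in> span {z}"
    by (intro span_neg span_scale span_base) auto
  ultimately have b: "b = 0"
    using unscale assms(2) by metis
  show ?thesis
    using eq a b assms(1) by simp
qed

definition lincomb3 :: "'b \<Rightarrow> 'b \<Rightarrow> 'b \<Rightarrow> 'a \<times> 'a \<times> 'a \<Rightarrow> 'b" where
  "lincomb3 x y z = (\<lambda>(a, b, c). a *s x + b *s y + c *s z)"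

lemma lincomb3_apply [simp]: "lincomb3 x y z (a, b, c) = a *s x + b *s y + c *s z"
  by (simp add: lincomb3_def)

lemma linear_lincomb3: "Vector_Spaces.linear scale3 scale (lincomb3 x y z)"
  unfolding linear_iff
  by (auto simp: vector_space_scale3 vector_space_axioms scale3_def plus_prod_def algebra_simps)

lemma bij_lincomb3:
  assumes "z \<noteq> 0" "y \<notin> span {z}" "x \<notin> span {y, z}" "dim UNIV = 3"
  shows "bij (lincomb3 x y z)"
proof (rule bijI)
  show "inj (lincomb3 x y z)"
    unfolding module_hom.inj_iff_eq_0[OF module_hom_linearI[OF linear_lincomb3]]
    using scalars_eq_0_if_triangular[OF assms(1-3)] by (auto simp: zero_prod_def)
  have "independent {x, y, z}"
    using assms(1-3) by (intro independent_insertI) (auto simp: independent_empty)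
  moreover have "card {x, y, z} = 3"
    using assms(1-3) span_base by (metis card_3_iff insertI1 insertI2)
  ultimately have span: "span {x, y, z} = UNIV"
    using assms(4) by (intro span_eq_UNIV_if_card_eq_dim) auto
  have "v \<in> range (lincomb3 x y z)" for v
  proof -
    obtain a where "v - a *s x \<in> span {y, z}"
      using span span_breakdown_eq by blast
    then obtain b where "v - a *s x - b *s y \<in> span {z}"
      using span_breakdown_eq by blast
    then obtain c where "v - a *s x - b *s y = c *s z"
      using span_singleton by blast
    then have "v = lincomb3 x y z (a, b, c)"
      by (simp add: algebra_simps)
    then show ?thesis
      by (rule range_eqI)
  qed
  then show "surj (lincomb3 x y z)"
    by blast
qed

end

locale lts =
  fixes s :: "'a::field \<Rightarrow> 'v::ab_group_add \<Rightarrow> 'v" and t :: "'v \<Rightarrow> 'v \<Rightarrow> 'v \<Rightarrow> 'v"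
  assumes lie_triple_system: "lie_triple_system s t"
begin

sublocale vector_space s
  using lie_triple_system by (simp add: lie_triple_system_def)

lemma
  shows linear_left: "Vector_Spaces.linear s s (\<lambda>x. t x y z)"
    and linear_middle: "Vector_Spaces.linear s s (\<lambda>y. t x y z)"
    and linear_right: "Vector_Spaces.linear s s (\<lambda>z. t x y z)"
  using lie_triple_system by (simp_all add: lie_triple_system_def)

lemma t_alternating [simp]: "t x x y = 0"
  using lie_triple_system by (simp add: lie_triple_system_def)

lemma t_jacobi: "t x y z + t y z x + t z x y = 0"
  using lie_triple_system by (simp add: lie_triple_system_def)

lemma t_add [simp]:
  "t (a + b) c d = t a c d + t b c d" "t c (a + b) d = t c a d + t c b d"
  "t c d (a + b) = t c d a + t c d b"
  using linear_left[of c d] linear_middle[of c d] linear_right[of c d]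
  by (simp_all add: linear_iff)

lemma t_scale [simp]:
  "t (s k a) c d = s k (t a c d)" "t c (s k a) d = s k (t c a d)" "t c d (s k a) = s k (t c d a)"
  using linear_left[of c d] linear_middle[of c d] linear_right[of c d]
  by (simp_all add: linear_iff)

lemma t_zero [simp]: "t 0 c d = 0" "t c 0 d = 0" "t c d 0 = 0"
  using module_hom.zero[OF module_hom_linearI[OF linear_left[of c d]]]
    module_hom.zero[OF module_hom_linearI[OF linear_middle[of c d]]]
    module_hom.zero[OF module_hom_linearI[OF linear_right[of c d]]]
  by simp_all

lemma t_neg [simp]: "t (- a) c d = - t a c d" "t c (- a) d = - t c a d" "t c d (- a) = - t c d a"
  using module_hom.neg[OF module_hom_linearI[OF linear_left[of c d]]]
    module_hom.neg[OF module_hom_linearI[OF linear_middle[of c d]]]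
    module_hom.neg[OF module_hom_linearI[OF linear_right[of c d]]]
  by simp_all

lemma t_diff [simp]:
  "t (a - b) c d = t a c d - t b c d" "t c (a - b) d = t c a d - t c b d"
  "t c d (a - b) = t c d a - t c d b"
  by (simp_all add: diff_conv_add_uminus del: add_uminus_conv_diff)

lemma t_skew: "t y x z = - t x y z"
proof -
  have "0 = t (x + y) (x + y) z"
    by simp
  also have "\<dots> = t x y z + t y x z"
    by (simp only: t_add) (simp add: add.commute)
  finally show ?thesis
    by (metis add.commute eq_neg_iff_add_eq_0)
qed

lemma t_lincomb2:
  "t (s a x + s b y) (s c x + s d y) r = s (a * d - b * c) (t x y r)"
  by (simp add: t_skew[of y x] algebra_simps)

abbreviation "lcs \<equiv> lts_lcs s t"
abbreviation "lcs1 \<equiv> lcs (Suc 0)"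
abbreviation "lcs2 \<equiv> lcs (Suc (Suc 0))"

lemma lcs_Suc: "lcs (Suc n) = span {t a b c |a b c. a \<in> lcs n}"
  by (simp only: lts_lcs.simps)

lemma subspace_lcs_Suc: "subspace (lcs (Suc n))"
  unfolding lcs_Suc by simp

lemma lcs_Suc_subset: "lcs (Suc n) \<subseteq> lcs n"
proof (induction n)
  case (Suc n)
  then have "{t a b c |a b c. a \<in> lcs (Suc n)} \<subseteq> {t a b c |a b c. a \<in> lcs n}"
    by blast
  then show ?case
    unfolding lcs_Suc[of "Suc n"] lcs_Suc[of n] by (rule span_mono)
qed simp

lemma lcs_eq_lcs1_if_lcs1_eq_lcs2:
  assumes "lcs1 = lcs2"
  shows "lcs (Suc n) = lcs1"
proof (induction n)
  case (Suc n)
  have "lcs (Suc (Suc n)) = span {t a b c |a b c. a \<in> lcs (Suc n)}"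
    by (rule lcs_Suc)
  also have "\<dots> = span {t a b c |a b c. a \<in> lcs1}"
    by (simp only: Suc)
  also have "\<dots> = lcs2"
    by (rule lcs_Suc[symmetric])
  finally show ?case
    using assms by (simp only:)
qed simp

lemma t_in_lcs1: "t a b c \<in> lcs1"
  unfolding lcs_Suc[of 0] by (rule span_base) auto

lemma t_in_lcs2_left: "a \<in> lcs1 \<Longrightarrow> t a b c \<in> lcs2"
  unfolding lcs_Suc[of "Suc 0"] by (rule span_base) blast

lemma t_in_lcs2_middle:
  assumes "b \<in> lcs1"
  shows "t a b c \<in> lcs2"
proof -
  have "- t b a c \<in> lcs2"
    by (rule subspace_neg[OF subspace_lcs_Suc t_in_lcs2_left[OF assms]])
  then show ?thesis
    by (simp only: t_skew[of b a c] minus_minus)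
qed

lemma t_in_lcs2_right:
  assumes "c \<in> lcs1"
  shows "t a b c \<in> lcs2"
proof -
  have "t a b c = t c b a - t c a b"
    using t_jacobi[of a b c] t_skew[of b c a] by (simp add: eq_neg_iff_add_eq_0 algebra_simps)
  moreover have "t c b a - t c a b \<in> lcs2"
    by (rule subspace_diff[OF subspace_lcs_Suc t_in_lcs2_left[OF assms] t_in_lcs2_left[OF assms]])
  ultimately show ?thesis
    by (simp only:)
qed

lemma lcs1_eq_0_if_subset_lcs2:
  assumes "lts_nilpotent s t" "lcs1 \<subseteq> lcs2"
  shows "lcs1 = {0}"
proof -
  obtain n where n: "lcs n = {0}"
    using assms(1) unfolding lts_nilpotent_def by blast
  have "lcs1 = lcs2"
    using assms(2) lcs_Suc_subset[of "Suc 0"] by blast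
  then have "lcs1 \<subseteq> {0}"
    using n lcs_eq_lcs1_if_lcs1_eq_lcs2 lcs_Suc_subset[of 0] by (cases n) blast+
  then show ?thesis
    using subspace_0[OF subspace_lcs_Suc] by blast
qed

definition center :: "'v set" where
  "center = {w. \<forall>a b. t w a b = 0 \<and> t a w b = 0 \<and> t a b w = 0}"

lemma lcs1_subset_lcs2_if_line_complement:
  assumes "\<And>a. \<exists>k. a - s k x \<in> lcs1"
  shows "lcs1 \<subseteq> lcs2"
proof -
  have "t a b c \<in> lcs2" for a b c
  proof -
    obtain k m where a: "a - s k x \<in> lcs1" and b: "b - s m x \<in> lcs1"
      using assms by blast
    have "t a b c = s k (t x (b - s m x) c) + t (a - s k x) b c"
      by (simp add: algebra_simps)
    then show ?thesis
      using subspace_add[OF subspace_lcs_Suc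
          subspace_scale[OF subspace_lcs_Suc t_in_lcs2_middle[OF b]] t_in_lcs2_left[OF a]]
      by (simp only:)
  qed
  then show ?thesis
    unfolding lcs_Suc[of 0] by (intro span_minimal subspace_lcs_Suc) blast
qed

lemma lcs1_subset_line:
  assumes "lts_nilpotent s t" "dim (UNIV :: 'v set) = 3" "w \<in> lcs1" "w \<noteq> 0"
  shows "lcs1 \<subseteq> span {w}"
proof
  fix u
  assume u: "u \<in> lcs1"
  show "u \<in> span {w}"
  proof (rule ccontr)
    assume u_w: "u \<notin> span {w}"
    have ind: "independent {u, w}"
      using u_w assms(4) by (intro independent_insertI) (auto simp: independent_empty)
    have "u \<noteq> w"
      using u_w span_base by blast
    have "span {u, w} \<noteq> UNIV"
    proof
      assume "span {u, w} = UNIV"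
      then have "dim (UNIV :: 'v set) = card {u, w}"
        by (metis dim_span dim_eq_card_independent[OF ind])
      then show False
        using assms(2) \<open>u \<noteq> w\<close> by simp
    qed
    then obtain x where x: "x \<notin> span {u, w}"
      by blast
    have "x \<notin> {u, w}"
      using x span_base by blast
    then have "card {x, u, w} = 3"
      using \<open>u \<noteq> w\<close> by auto
    moreover have "independent {x, u, w}"
      using x ind by (rule independent_insertI)
    ultimately have span: "span {x, u, w} = UNIV"
      using assms(2) by (intro span_eq_UNIV_if_card_eq_dim) auto
    have "span {u, w} \<subseteq> lcs1"
      using u assms(3) by (intro span_minimal subspace_lcs_Suc) auto
    then have "\<exists>k. a - s k x \<in> lcs1" for a
      using span span_breakdown_eq[of a x "{u, w}"] by blast
    then have "lcs1 \<subseteq> lcs2"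
      by (rule lcs1_subset_lcs2_if_line_complement)
    then show False
      using lcs1_eq_0_if_subset_lcs2[OF assms(1)] assms(3,4) by blast
  qed
qed

lemma lcs1_subset_center:
  assumes "lts_nilpotent s t" "dim (UNIV :: 'v set) = 3"
  shows "lcs1 \<subseteq> center"
proof (cases "lcs1 \<subseteq> lcs2")
  case True
  then show ?thesis
    using lcs1_eq_0_if_subset_lcs2[OF assms(1)] by (simp add: center_def)
next
  case False
  then obtain w where w: "w \<in> lcs1" "w \<notin> lcs2"
    by blast
  then have line: "lcs1 \<subseteq> span {w}"
    using lcs1_subset_line[OF assms] subspace_0[OF subspace_lcs_Suc] by blast
  have lcs2_0: "v = 0" if v: "v \<in> lcs2" for v
  proof -
    obtain k where k: "v = s k w"
      using v lcs_Suc_subset[of "Suc 0"] line span_singleton by blast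
    have "k = 0"
    proof (rule ccontr)
      assume "k \<noteq> 0"
      then have "w = s (inverse k) v"
        using k by simp
      then show False
        using w(2) subspace_scale[OF subspace_lcs_Suc v] by metis
    qed
    then show ?thesis
      using k by simp
  qed
  show ?thesis
    using t_in_lcs2_left t_in_lcs2_middle t_in_lcs2_right lcs2_0 unfolding center_def by blast
qed

lemma triangular_if_t_ne_0:
  assumes "w \<in> center" "t x y z \<noteq> 0"
  shows "y \<notin> span {w}" "x \<notin> span {y, w}"
proof -
  show "y \<notin> span {w}"
  proof
    assume "y \<in> span {w}"
    then obtain k where "y = s k w"
      using span_singleton by blast
    then show False
      using assms unfolding center_def by simp
  qed
  show "x \<notin> span {y, w}"
  proof
    assume "x \<in> span {y, w}"
    then obtain k m where "x - s k y = s m w"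
      using span_breakdown_eq span_singleton by blast
    then have "x = s k y + s m w"
      by (simp add: algebra_simps)
    then show False
      using assms unfolding center_def by simp
  qed
qed

lemma t_lincomb3_T32:
  assumes "t e1 e2 e1 \<in> center" "t e1 e2 e2 = 0"
  defines "h \<equiv> lincomb3 e1 e2 (t e1 e2 e1)"
  shows "t (h u) (h v) (h r) = h (T32 u v r)"
proof -
  obtain a1 b1 c1 a2 b2 c2 a3 b3 c3 where uvr: "u = (a1, b1, c1)" "v = (a2, b2, c2)" "r = (a3, b3, c3)"
    by (metis prod_cases3)
  have "t (h u) (h v) (h r) = t (s a1 e1 + s b1 e2) (s a2 e1 + s b2 e2) (s a3 e1 + s b3 e2)"
    using assms(1) unfolding uvr h_def center_def by simp
  also have "\<dots> = s (a1 * b2 - b1 * a2) (t e1 e2 (s a3 e1 + s b3 e2))"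
    by (rule t_lincomb2)
  also have "\<dots> = h (T32 u v r)"
    using assms(2) unfolding uvr h_def T32_def by (simp add: algebra_simps)
  finally show ?thesis .
qed

lemma exists_T32_pair:
  assumes "lts_nilpotent s t" "dim (UNIV :: 'v set) = 3" "t x y z \<noteq> 0"
  obtains e1 e2 where "t e1 e2 e1 \<noteq> 0" "t e1 e2 e2 = 0"
proof -
  define w where "w = t x y z"
  have "w \<in> center" "w \<noteq> 0"
    using lcs1_subset_center[OF assms(1,2)] t_in_lcs1 assms(3) unfolding w_def by auto
  have line: "lcs1 \<subseteq> span {w}"
    using lcs1_subset_line[OF assms(1,2)] t_in_lcs1 assms(3) unfolding w_def by blast
  obtain \<alpha> \<beta> where \<alpha>: "t x y x = s \<alpha> w" and \<beta>: "t x y y = s \<beta> w"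
    using line t_in_lcs1 span_singleton by (metis (no_types, lifting) imageE subsetD)
  have "\<alpha> \<noteq> 0 \<or> \<beta> \<noteq> 0"
  proof (rule ccontr)
    assume "\<not> (\<alpha> \<noteq> 0 \<or> \<beta> \<noteq> 0)"
    have "bij (lincomb3 x y w)"
      using bij_lincomb3 triangular_if_t_ne_0 \<open>w \<in> center\<close> \<open>w \<noteq> 0\<close> assms(2,3) by blast
    then obtain a b c where z: "z = lincomb3 x y w (a, b, c)"
      by (metis bij_is_surj surj_f_inv_f prod_cases3)
    have "w = t x y z"
      by (fact w_def)
    also have "\<dots> = t x y (lincomb3 x y w (a, b, c))"
      using z by (rule arg_cong)
    also have "\<dots> = s a (t x y x) + s b (t x y y)"
      using \<open>w \<in> center\<close> unfolding center_def by simp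
    finally show False
      using \<alpha> \<beta> \<open>\<not> (\<alpha> \<noteq> 0 \<or> \<beta> \<noteq> 0)\<close> \<open>w \<noteq> 0\<close> by simp
  qed
  then obtain a b where ab: "\<alpha> * a + \<beta> * b = 1"
    by (metis add_0 mult_zero_right right_inverse add.commute)
  \<comment> \<open>e2 spans the part of span {x, y} on which t x y vanishes; e1 is normalised against it.\<close>
  define e1 where "e1 = s a x + s b y"
  define e2 where "e2 = s \<beta> x + s (- \<alpha>) y"
  have "a * - \<alpha> - b * \<beta> = - 1"
    using ab by (simp add: algebra_simps)
  then have e12: "t e1 e2 r = - t x y r" for r
    unfolding e1_def e2_def t_lincomb2 by simp
  show ?thesis
  proof
    have "t e1 e2 e1 = - s (\<alpha> * a + \<beta> * b) w"
      using e12[of e1] \<alpha> \<beta> unfolding e1_def by (simp add: scale_left_distrib mult.commute)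
    then show "t e1 e2 e1 \<noteq> 0"
      using ab \<open>w \<noteq> 0\<close> by simp
    show "t e1 e2 e2 = 0"
      using e12[of e2] \<alpha> \<beta> unfolding e2_def by (simp add: mult.commute)
  qed
qed

lemma lts_isomorphic_T32_if_t_ne_0:
  assumes "lts_nilpotent s t" "dim (UNIV :: 'v set) = 3" "t x y z \<noteq> 0"
  shows "lts_isomorphic s t scale3 T32"
proof -
  obtain e1 e2 where e1e2: "t e1 e2 e1 \<noteq> 0" "t e1 e2 e2 = 0"
    using exists_T32_pair[OF assms] .
  have "t e1 e2 e1 \<in> center"
    using lcs1_subset_center[OF assms(1,2)] t_in_lcs1 by blast
  then have "bij (lincomb3 e1 e2 (t e1 e2 e1))"
    using bij_lincomb3 triangular_if_t_ne_0 e1e2(1) assms(2) by blast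
  with linear_lincomb3 show ?thesis
    using t_lincomb3_T32[OF \<open>t e1 e2 e1 \<in> center\<close> e1e2(2)] by (rule lts_isomorphicI_inverse)
qed

lemma lts_isomorphic_T31_if_t_eq_0:
  assumes "dim (UNIV :: 'v set) = 3" "\<And>x y z. t x y z = 0"
  shows "lts_isomorphic s t scale3 T31"
proof -
  obtain B where "independent B" "span B = UNIV" "card B = 3"
    using basis_exists[of UNIV] assms(1) by (metis span_UNIV span_eq subset_UNIV)
  then obtain x y z where "independent {x, y, z}" "span {x, y, z} = UNIV" "x \<noteq> y" "x \<noteq> z" "y \<noteq> z"
    by (metis card_3_iff)
  then have "bij (lincomb3 x y z)"
    using assms(1) by (intro bij_lincomb3) (auto simp: independent_insert)
  then show ?thesis
    by (rule lts_isomorphicI_inverse[OF linear_lincomb3]) (simp add: assms(2) T31_def zero_prod_def)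
qed

end

theorem mainTheorem3:
  fixes s :: "'a::field \<Rightarrow> 'v::ab_group_add \<Rightarrow> 'v"
    and t :: "'v \<Rightarrow> 'v \<Rightarrow> 'v \<Rightarrow> 'v"
  assumes "CHAR('a) \<noteq> 2"
    and "lie_triple_system s t"
    and "lts_nilpotent s t"
    and "vector_space.dim s (UNIV :: 'v set) = 3"
  shows "lts_isomorphic s t scale3 (T31 :: 'a \<times> 'a \<times> 'a \<Rightarrow> _ \<Rightarrow> _ \<Rightarrow> _) \<noteq>
         lts_isomorphic s t scale3 (T32 :: 'a \<times> 'a \<times> 'a \<Rightarrow> _ \<Rightarrow> _ \<Rightarrow> _)"
proof -
  interpret lts s t
    by (rule lts.intro) fact
  have "lts_isomorphic s t scale3 (T31 :: 'a \<times> 'a \<times> 'a \<Rightarrow> _ \<Rightarrow> _ \<Rightarrow> _) \<longleftrightarrow> (\<forall>x y z. t x y z = 0)"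
    using lts_isomorphic_T31_if_t_eq_0 t_eq_0_if_lts_isomorphic_T31 assms(4) by blast
  moreover have "lts_isomorphic s t scale3 (T32 :: 'a \<times> 'a \<times> 'a \<Rightarrow> _ \<Rightarrow> _ \<Rightarrow> _) \<longleftrightarrow> (\<exists>x y z. t x y z \<noteq> 0)"
    using lts_isomorphic_T32_if_t_ne_0 t_ne_0_if_lts_isomorphic_T32 assms(3,4) by blast
  ultimately show ?thesis
    by blast
qed

end
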